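(* In the BICM setting described in the context, with message $1$ transmitted and $\mathsf D$ the ORBGRAND metric, $\lim_{N\to\infty}\operatorname{var}\mathsf D(1)=0$.
   Context: Let $m\ge1$, let $\mathcal S$ be a constellation with $|\mathcal S|=2^m$, and let $\mu:\{+1,-1\}^m\to\mathcal S$ be a bijective labeling. For $s\in\mathcal S$, let $b_j(s)$ be the $j$-th coordinate of $\mu^{-1}(s)$. The channel is memoryless with output space $\mathbb R^d$ (norm $|\cdot|$) and transition densities $p(y\mid s)$. For $j=1,\dots,m$ define $$q_j^\pm(y)=2^{-(m-1)}\sum_{s:\,b_j(s)=\pm1}p(y\mid s).$$ For each $j$, let $\mathsf X_j$ be uniform on $\{\pm1\}$ and let $\mathsf Y$ have density $q_j^{\mathsf X_j}$ given $\mathsf X_j$. Let $\Psi_j$ be the CDF of $|\ln(q_j^+(\mathsf Y)/q_j^-(\mathsf Y))|$, and let $\bar\Psi=\frac1m\sum_j\Psi_j$. Assume that for each $j$: (A1) there exist $M_1>0$, $a>0$ and a polynomial $S_1$ with $q_j^\pm(y)<S_1(|y|)e^{-a|y|}$ for $|y|>M_1$; (A2) there exist $M_2>0$ and a polynomial $S_2$ with $|\ln(q_j^+(y)/q_j^-(y))|<S_2(|y|)$ for $|y|>M_2$; (A3) $\Psi_j$, $\Psi_j^{-1}$, $\bar\Psi$ and $\bar\Psi^{-1}$ are smooth with finite first, second and third derivatives. Random coding: the codebook has $\lceil e^{NR}\rceil$ codewords, each consisting of bits $\mathsf X_{i,j}(w)$, $i\le N$, $j\le m$, all i.i.d. uniform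 on $\{\pm1\}$. Message $1$ is transmitted. Symbol $i$ is $s_i(1)=\mu(\mathsf X_{i,1}(1),\dots,\mathsf X_{i,m}(1))$, and the outputs $\mathsf Y_i$ are conditionally independent with densities $p(\cdot\mid s_i(1))$. Let $\mathsf T_{i,j}=\ln(q_j^+(\mathsf Y_i)/q_j^-(\mathsf Y_i))$. Let $\mathsf R_{i,j}$ be the rank of $|\mathsf T_{i,j}|$ among all $mN$ values (rank $1$ is the smallest). Let $\mathrm{sgn}(t)=1$ if $t\ge0$ and $-1$ otherwise. The ORBGRAND metric is $$\mathsf D(w)=\frac1{mN}\sum_{i,j}\frac{\mathsf R_{i,j}}{mN}\mathbf 1\big(\mathrm{sgn}(\mathsf T_{i,j})\mathsf X_{i,j}(w)<0\big).$$ *)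

theory Defs
  imports "HOL-Probability.Probability" "HOL-Computational_Algebra.Polynomial"
begin

definition bitvecs :: "nat \<Rightarrow> (nat \<Rightarrow> real) set" where
  "bitvecs m = ({..<m} \<rightarrow>\<^sub>E {-1, 1})"

definition bitlab :: "nat \<Rightarrow> ((nat \<Rightarrow> real) \<Rightarrow> 's) \<Rightarrow> 's \<Rightarrow> nat \<Rightarrow> real" where
  "bitlab m \<mu> s j = inv_into (bitvecs m) \<mu> s j"

definition qj :: "nat \<Rightarrow> 's set \<Rightarrow> ((nat \<Rightarrow> real) \<Rightarrow> 's) \<Rightarrow> ('s \<Rightarrow> 'a \<Rightarrow> real)
                  \<Rightarrow> nat \<Rightarrow> real \<Rightarrow> 'a \<Rightarrow> real" where
  "qj m S \<mu> p j \<sigma> y = inverse (2 ^ (m - 1)) * (\<Sum>s\<in>{s\<in>S. bitlab m \<mu> s j = \<sigma>}. p s y)"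

definition llr :: "nat \<Rightarrow> 's set \<Rightarrow> ((nat \<Rightarrow> real) \<Rightarrow> 's) \<Rightarrow> ('s \<Rightarrow> 'a \<Rightarrow> real)
                  \<Rightarrow> nat \<Rightarrow> 'a \<Rightarrow> real" where
  "llr m S \<mu> p j y = ln (qj m S \<mu> p j 1 y / qj m S \<mu> p j (-1) y)"

text \<open>Psi_j: CDF of |llr_j(Y)| where X_j uniform on {+1,-1} and Y has density q_j^{X_j},
  i.e. Y has density (q_j^+ + q_j^-)/2 with respect to Lebesgue measure.\<close>
definition PsiCDF :: "nat \<Rightarrow> 's set \<Rightarrow> ((nat \<Rightarrow> real) \<Rightarrow> 's) \<Rightarrow> ('s \<Rightarrow> 'a::euclidean_space \<Rightarrow> real)
                  \<Rightarrow> nat \<Rightarrow> real \<Rightarrow> real" where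
  "PsiCDF m S \<mu> p j t =
     measure (density lborel (\<lambda>y. ennreal ((qj m S \<mu> p j 1 y + qj m S \<mu> p j (-1) y) / 2)))
             {y. \<bar>llr m S \<mu> p j y\<bar> \<le> t}"

definition C3_on :: "real set \<Rightarrow> (real \<Rightarrow> real) \<Rightarrow> bool" where
  "C3_on A f \<longleftrightarrow> (\<forall>x\<in>A. \<forall>k<3. ((deriv ^^ k) f) differentiable (at x))"

definition smooth_cdf :: "(real \<Rightarrow> real) \<Rightarrow> bool" where
  "smooth_cdf F \<longleftrightarrow> C3_on {0<..} F \<and>
     (\<exists>G. (\<forall>t\<in>{0<..}. F t \<in> {0<..<1} \<and> G (F t) = t) \<and>
          (\<forall>u\<in>{0<..<1}. G u \<in> {0<..} \<and> F (G u) = u) \<and>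
          C3_on {0<..<1} G)"

definition sgnp :: "real \<Rightarrow> real" where
  "sgnp t = (if t \<ge> 0 then 1 else -1)"

text \<open>Law of one channel use (bits of codeword 1 at position i, output Y_i):
  bits uniform on {+1,-1}^m, output with density p(. | mu(bits)).\<close>
definition sym_measure :: "nat \<Rightarrow> ((nat \<Rightarrow> real) \<Rightarrow> 's) \<Rightarrow> ('s \<Rightarrow> 'a::euclidean_space \<Rightarrow> real)
                  \<Rightarrow> ((nat \<Rightarrow> real) \<times> 'a) measure" where
  "sym_measure m \<mu> p = density (count_space (bitvecs m) \<Otimes>\<^sub>M lborel)
      (\<lambda>(b, y). ennreal ((1/2) ^ m * p (\<mu> b) y))"

text \<open>Joint law of (X_{i,.}(1), Y_i), i < N: i.i.d. over i.\<close>
definition trans_measure :: "nat \<Rightarrow> ((nat \<Rightarrow> real) \<Rightarrow> 's) \<Rightarrow> ('s \<Rightarrow> 'a::euclidean_space \<Rightarrow> real)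
                  \<Rightarrow> nat \<Rightarrow> (nat \<Rightarrow> (nat \<Rightarrow> real) \<times> 'a) measure" where
  "trans_measure m \<mu> p N = (\<Pi>\<^sub>M i\<in>{..<N}. sym_measure m \<mu> p)"

definition rankT :: "nat \<Rightarrow> 's set \<Rightarrow> ((nat \<Rightarrow> real) \<Rightarrow> 's) \<Rightarrow> ('s \<Rightarrow> 'a \<Rightarrow> real) \<Rightarrow> nat
                  \<Rightarrow> (nat \<Rightarrow> (nat \<Rightarrow> real) \<times> 'a) \<Rightarrow> nat \<Rightarrow> nat \<Rightarrow> nat" where
  "rankT m S \<mu> p N \<omega> i j =
     1 + card {(i', j') \<in> {..<N} \<times> {..<m}.
        \<bar>llr m S \<mu> p j' (snd (\<omega> i'))\<bar> < \<bar>llr m S \<mu> p j (snd (\<omega> i))\<bar> \<or>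
        (\<bar>llr m S \<mu> p j' (snd (\<omega> i'))\<bar> = \<bar>llr m S \<mu> p j (snd (\<omega> i))\<bar> \<and> i' * m + j' < i * m + j)}"

definition orbgrand_D1 :: "nat \<Rightarrow> 's set \<Rightarrow> ((nat \<Rightarrow> real) \<Rightarrow> 's) \<Rightarrow> ('s \<Rightarrow> 'a \<Rightarrow> real) \<Rightarrow> nat
                  \<Rightarrow> (nat \<Rightarrow> (nat \<Rightarrow> real) \<times> 'a) \<Rightarrow> real" where
  "orbgrand_D1 m S \<mu> p N \<omega> =
     (1 / real (m * N)) * (\<Sum>i<N. \<Sum>j<m.
        (real (rankT m S \<mu> p N \<omega> i j) / real (m * N)) *
        (if sgnp (llr m S \<mu> p j (snd (\<omega> i))) * fst (\<omega> i) j < 0 then 1 else 0))"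

end

theory Submission
  imports Defs
begin

text \<open>Since rank(i,j) = 1 + #{(i',j') ranked below (i,j)}, D(1) splits into N^2 terms Z(i,i'), each
  bounded by (1+m)/(m N^2) and depending only on the channel uses i and i'. The channel uses are
  i.i.d., so Z(i,i') and Z(k,k') are independent unless {i,i'} and {k,k'} meet, which happens for
  at most 4N^3 of the N^4 pairs of terms. Bounding each remaining covariance by 2 max|Z|^2 gives
  var D(1) <= 8 (1+m)^2 / (m^2 N).\<close>

lemma (in prob_space) abs_expectation_le_const:
  fixes f :: "'a \<Rightarrow> real"
  assumes "integrable M f" and "\<And>x. x \<in> space M \<Longrightarrow> \<bar>f x\<bar> \<le> B"
  shows "\<bar>expectation f\<bar> \<le> B"
proof -
  have "\<bar>expectation f\<bar> \<le> expectation (\<lambda>x. \<bar>f x\<bar>)"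
    by (rule integral_abs_bound)
  also have "\<dots> \<le> B"
    using assms by (intro integral_le_const AE_I2) auto
  finally show ?thesis .
qed

lemma (in prob_space) variance_sum_le_card_dependent:
  fixes Z :: "'t \<Rightarrow> 'a \<Rightarrow> real"
  assumes "finite T"
    and Z_meas: "\<And>t. t \<in> T \<Longrightarrow> random_variable borel (Z t)"
    and Z_bound: "\<And>t x. t \<in> T \<Longrightarrow> x \<in> space M \<Longrightarrow> \<bar>Z t x\<bar> \<le> B"
    and uncorrelated: "\<And>t u. t \<in> T \<Longrightarrow> u \<in> T \<Longrightarrow> \<not> dep t u \<Longrightarrow>
      expectation (\<lambda>x. Z t x * Z u x) = expectation (Z t) * expectation (Z u)"
  shows "variance (\<lambda>x. \<Sum>t\<in>T. Z t x) \<le> 2 * B\<^sup>2 * card {(t, u) \<in> T \<times> T. dep t u}"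
proof -
  have Z_int: "integrable M (Z t)" if "t \<in> T" for t
    using Z_meas Z_bound that by (intro integrable_const_bound[where B=B]) auto
  have ZZ_bound: "\<bar>Z t x * Z u x\<bar> \<le> B\<^sup>2" if "t \<in> T" "u \<in> T" "x \<in> space M" for t u x
    using Z_bound[OF that(1,3)] Z_bound[OF that(2,3)] unfolding abs_mult power2_eq_square
    by (intro mult_mono') auto
  have ZZ_int: "integrable M (\<lambda>x. Z t x * Z u x)" if "t \<in> T" "u \<in> T" for t u
    using Z_meas that ZZ_bound by (intro integrable_const_bound[where B="B\<^sup>2"]) auto
  have covariance_le: "expectation (\<lambda>x. Z t x * Z u x) - expectation (Z t) * expectation (Z u)
      \<le> 2 * B\<^sup>2 * of_bool (dep t u)" if "t \<in> T" "u \<in> T" for t u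
  proof (cases "dep t u")
    case True
    have "\<bar>expectation (\<lambda>x. Z t x * Z u x)\<bar> \<le> B\<^sup>2"
      using that by (intro abs_expectation_le_const ZZ_int ZZ_bound)
    moreover have "\<bar>expectation (Z t) * expectation (Z u)\<bar> \<le> B\<^sup>2"
      unfolding abs_mult power2_eq_square using that
      by (intro mult_mono' abs_expectation_le_const Z_int Z_bound) auto
    ultimately show ?thesis using True by simp
  qed (use uncorrelated that in simp)
  have "variance (\<lambda>x. \<Sum>t\<in>T. Z t x)
      = (\<Sum>t\<in>T. \<Sum>u\<in>T. expectation (\<lambda>x. Z t x * Z u x) - expectation (Z t) * expectation (Z u))"
    using Z_int ZZ_int
    by (subst variance_eq) (simp_all add: power2_eq_square sum_product sum_subtractf)
  also have "\<dots> \<le> (\<Sum>t\<in>T. \<Sum>u\<in>T. 2 * B\<^sup>2 * of_bool (dep t u))"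
    by (intro sum_mono covariance_le)
  also have "\<dots> = 2 * B\<^sup>2 * card (SIGMA t:T. {u \<in> T. dep t u})"
    using \<open>finite T\<close> by (simp add: sum_distrib_left[symmetric] Int_def)
  also have "(SIGMA t:T. {u \<in> T. dep t u}) = {(t, u) \<in> T \<times> T. dep t u}"
    by auto
  finally show ?thesis .
qed

lemma (in product_prob_space) indep_vars_components:
  assumes "I \<noteq> {}"
  shows "prob_space.indep_vars (PiM I M) M (\<lambda>i \<omega>. \<omega> i) I"
proof -
  have "distr (PiM I M) (PiM I M) (\<lambda>\<omega>. restrict \<omega> I) = distr (PiM I M) (PiM I M) (\<lambda>\<omega>. \<omega>)"
    by (intro distr_cong) (auto simp: space_PiM)
  moreover have "PiM I (\<lambda>i. distr (PiM I M) (M i) (\<lambda>\<omega>. \<omega> i)) = PiM I M"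
    by (intro PiM_cong PiM_component) auto
  ultimately show ?thesis
    using assms by (subst P.indep_vars_iff_distr_eq_PiM') auto
qed

lemma (in product_prob_space) integral_mult_disjoint_coordinates:
  fixes f g :: "('i \<Rightarrow> 'a) \<Rightarrow> real"
  assumes "A \<inter> B = {}" "A \<subseteq> I" "B \<subseteq> I"
    and f_meas: "f \<in> borel_measurable (PiM A M)" and g_meas: "g \<in> borel_measurable (PiM B M)"
    and f_restrict: "\<And>\<omega>. f (restrict \<omega> A) = f \<omega>"
    and g_restrict: "\<And>\<omega>. g (restrict \<omega> B) = g \<omega>"
    and "integrable (PiM I M) f" "integrable (PiM I M) g"
  shows "(\<integral>\<omega>. f \<omega> * g \<omega> \<partial>PiM I M) = (\<integral>\<omega>. f \<omega> \<partial>PiM I M) * (\<integral>\<omega>. g \<omega> \<partial>PiM I M)"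
proof (cases "I = {}")
  case True
  have "f \<omega> = f (\<lambda>_. undefined)" "g \<omega> = g (\<lambda>_. undefined)" for \<omega>
    using True assms(2,3) f_restrict[of \<omega>] g_restrict[of \<omega>] by (simp_all add: restrict_def)
  then obtain c d where "\<And>\<omega>. f \<omega> = c" "\<And>\<omega>. g \<omega> = d"
    by blast
  then show ?thesis
    using P.prob_space by simp
next
  case False
  have "P.indep_var (PiM A M) (\<lambda>\<omega>. restrict \<omega> A) (PiM B M) (\<lambda>\<omega>. restrict \<omega> B)"
    using P.indep_var_restrict[OF indep_vars_components[OF False] assms(1-3)] by simp
  then have "P.indep_var borel (f \<circ> (\<lambda>\<omega>. restrict \<omega> A)) borel (g \<circ> (\<lambda>\<omega>. restrict \<omega> B))"
    using f_meas g_meas by (rule P.indep_var_compose)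
  then show ?thesis
    using assms(8,9) by (simp add: comp_def f_restrict g_restrict P.indep_var_lebesgue_integral)
qed

lemma card_overlapping_index_pairs_le:
  "card {(t, u) \<in> ({..<N} \<times> {..<N}) \<times> ({..<N} \<times> {..<N}). {fst t, snd t} \<inter> {fst u, snd u} \<noteq> {}}
     \<le> 4 * N ^ 3"
proof -
  let ?T = "{..<N} \<times> {..<N :: nat}"
  let ?U = "\<lambda>t. {u \<in> ?T. {fst t, snd t} \<inter> {fst u, snd u} \<noteq> {}}"
  have "card (?U t) \<le> 4 * N" for t
  proof -
    have "card (?U t) \<le> card ({fst t, snd t} \<times> {..<N} \<union> {..<N} \<times> {fst t, snd t})"
      by (intro card_mono) auto
    also have "\<dots> \<le> card {fst t, snd t} * N + N * card {fst t, snd t}"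
      by (rule order_trans[OF card_Un_le]) (simp add: card_cartesian_product)
    also have "\<dots> \<le> 2 * N + N * 2"
      using card_insert_le_m1[of 2 "{snd t}" "fst t"] by (intro add_mono mult_mono) auto
    finally show ?thesis by simp
  qed
  then have "(\<Sum>t\<in>?T. card (?U t)) \<le> (\<Sum>t\<in>?T. 4 * N)"
    by (intro sum_mono)
  moreover have "{(t, u) \<in> ?T \<times> ?T. {fst t, snd t} \<inter> {fst u, snd u} \<noteq> {}} = Sigma ?T ?U"
    by auto
  ultimately show ?thesis by (simp add: power3_eq_cube)
qed

definition rank_precedes ::
    "nat \<Rightarrow> (nat \<Rightarrow> 'w \<Rightarrow> real) \<Rightarrow> (nat \<Rightarrow> 'w) \<Rightarrow> nat \<Rightarrow> nat \<Rightarrow> nat \<Rightarrow> nat \<Rightarrow> bool" where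
  "rank_precedes m A \<omega> i' j' i j \<longleftrightarrow>
     (if i' * m + j' < i * m + j then A j' (\<omega> i') \<le> A j (\<omega> i) else A j' (\<omega> i') < A j (\<omega> i))"

text \<open>The contribution of channel use i' to the ranks of the erroneous bits of channel use i,
  given the bit reliabilities A and the hard-decision error indicators E.\<close>
definition orbgrand_pair_term ::
    "nat \<Rightarrow> nat \<Rightarrow> (nat \<Rightarrow> 'w \<Rightarrow> real) \<Rightarrow> (nat \<Rightarrow> 'w \<Rightarrow> real) \<Rightarrow> nat \<Rightarrow> nat \<Rightarrow> (nat \<Rightarrow> 'w) \<Rightarrow> real" where
  "orbgrand_pair_term m N A E i i' \<omega> =
     (\<Sum>j<m. E j (\<omega> i) * (of_bool (i' = i) + (\<Sum>j'<m. of_bool (rank_precedes m A \<omega> i' j' i j))))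
       / (real (m * N))\<^sup>2"

lemma orbgrand_pair_term_restrict:
  "orbgrand_pair_term m N A E i i' \<omega> = orbgrand_pair_term m N A E i i' (restrict \<omega> {i, i'})"
  by (simp add: orbgrand_pair_term_def rank_precedes_def)

lemma measurable_orbgrand_pair_term:
  fixes A E :: "nat \<Rightarrow> 'w \<Rightarrow> real"
  assumes [measurable]: "\<And>j. A j \<in> borel_measurable M" "\<And>j. E j \<in> borel_measurable M"
    and "i \<in> K" "i' \<in> K"
  shows "orbgrand_pair_term m N A E i i' \<in> borel_measurable (PiM K (\<lambda>_. M))"
proof -
  have [measurable]: "(\<lambda>\<omega>. A j (\<omega> k)) \<in> borel_measurable (PiM K (\<lambda>_. M))"
    "(\<lambda>\<omega>. E j (\<omega> k)) \<in> borel_measurable (PiM K (\<lambda>_. M))" if "k \<in> K" for j k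
    using that by measurable
  have [measurable]: "Measurable.pred (PiM K (\<lambda>_. M)) (\<lambda>\<omega>. A j' (\<omega> i') \<le> A j (\<omega> i))"
    "Measurable.pred (PiM K (\<lambda>_. M)) (\<lambda>\<omega>. A j' (\<omega> i') < A j (\<omega> i))" for j j'
    unfolding Measurable.pred_def using assms(3,4) by measurable
  have [measurable]: "Measurable.pred (PiM K (\<lambda>_. M)) (\<lambda>\<omega>. rank_precedes m A \<omega> i' j' i j)" for j j'
    unfolding rank_precedes_def by (cases "i' * m + j' < i * m + j") simp_all
  show ?thesis
    unfolding orbgrand_pair_term_def using assms(3) by measurable
qed

lemma abs_orbgrand_pair_term_le:
  assumes "\<And>j w. 0 \<le> E j w" "\<And>j w. E j w \<le> 1"
  shows "\<bar>orbgrand_pair_term m N A E i i' \<omega>\<bar> \<le> (1 + real m) / (real m * (real N)\<^sup>2)"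
proof -
  define c :: "nat \<Rightarrow> real"
    where "c j = of_bool (i' = i) + (\<Sum>j'<m. of_bool (rank_precedes m A \<omega> i' j' i j))" for j
  have "card ({..<m} \<inter> X) \<le> m" for X
    using card_mono[of "{..<m}" "{..<m} \<inter> X"] by auto
  then have "0 \<le> c j" "c j \<le> 1 + real m" for j
    unfolding c_def by (auto simp: add_mono)
  then have "0 \<le> E j (\<omega> i) * c j" "E j (\<omega> i) * c j \<le> 1 + real m" for j
    using assms[of j "\<omega> i"] mult_mono[of "E j (\<omega> i)" 1 "c j" "1 + real m"] by auto
  then have "0 \<le> (\<Sum>j<m. E j (\<omega> i) * c j)" "(\<Sum>j<m. E j (\<omega> i) * c j) \<le> real m * (1 + real m)"
    using sum_bounded_above[of "{..<m}" "\<lambda>j. E j (\<omega> i) * c j" "1 + real m"] by (auto intro: sum_nonneg)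
  then show ?thesis
    unfolding orbgrand_pair_term_def c_def[symmetric]
    by (cases "m = 0 \<or> N = 0") (auto simp: divide_right_mono power2_eq_square field_simps)
qed

definition bit_reliability ::
    "nat \<Rightarrow> 's set \<Rightarrow> ((nat \<Rightarrow> real) \<Rightarrow> 's) \<Rightarrow> ('s \<Rightarrow> 'a \<Rightarrow> real) \<Rightarrow> nat \<Rightarrow> (nat \<Rightarrow> real) \<times> 'a \<Rightarrow> real"
  where "bit_reliability m S \<mu> p j w = \<bar>llr m S \<mu> p j (snd w)\<bar>"

definition bit_error ::
    "nat \<Rightarrow> 's set \<Rightarrow> ((nat \<Rightarrow> real) \<Rightarrow> 's) \<Rightarrow> ('s \<Rightarrow> 'a \<Rightarrow> real) \<Rightarrow> nat \<Rightarrow> (nat \<Rightarrow> real) \<times> 'a \<Rightarrow> real"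
  where "bit_error m S \<mu> p j w = of_bool (sgnp (llr m S \<mu> p j (snd w)) * fst w j < 0)"

lemma rankT_eq_card_rank_precedes:
  "rankT m S \<mu> p N \<omega> i j =
     1 + card {(i', j') \<in> {..<N} \<times> {..<m}. rank_precedes m (bit_reliability m S \<mu> p) \<omega> i' j' i j}"
  unfolding rankT_def rank_precedes_def bit_reliability_def by (auto intro!: arg_cong[where f=card])

lemma real_rankT_eq_sum:
  assumes "i < N"
  shows "real (rankT m S \<mu> p N \<omega> i j) =
    (\<Sum>i'<N. of_bool (i' = i) + (\<Sum>j'<m. of_bool (rank_precedes m (bit_reliability m S \<mu> p) \<omega> i' j' i j)))"
proof -
  let ?P = "\<lambda>i' j'. rank_precedes m (bit_reliability m S \<mu> p) \<omega> i' j' i j"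
  have "card {(i', j') \<in> {..<N} \<times> {..<m}. ?P i' j'} = card (SIGMA i':{..<N}. {j' \<in> {..<m}. ?P i' j'})"
    by (intro arg_cong[where f=card]) auto
  also have "\<dots> = (\<Sum>i'<N. \<Sum>j'<m. of_bool (?P i' j'))"
    by (simp add: Int_def)
  finally show ?thesis
    using assms by (simp add: rankT_eq_card_rank_precedes sum.distrib)
qed

lemma orbgrand_D1_eq_sum_pair_terms:
  "orbgrand_D1 m S \<mu> p N \<omega> =
     (\<Sum>i<N. \<Sum>i'<N. orbgrand_pair_term m N (bit_reliability m S \<mu> p) (bit_error m S \<mu> p) i i' \<omega>)"
proof -
  let ?E = "\<lambda>i j. bit_error m S \<mu> p j (\<omega> i)"
  let ?c = "\<lambda>i j i'. of_bool (i' = i) +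
    (\<Sum>j'<m. of_bool (rank_precedes m (bit_reliability m S \<mu> p) \<omega> i' j' i j))"
  have "orbgrand_D1 m S \<mu> p N \<omega> = (\<Sum>i<N. \<Sum>j<m. ?E i j * real (rankT m S \<mu> p N \<omega> i j)) / (real (m * N))\<^sup>2"
    unfolding orbgrand_D1_def bit_error_def
    by (simp add: sum_divide_distrib sum_distrib_left power2_eq_square of_bool_def mult.commute)
  also have "\<dots> = (\<Sum>i<N. \<Sum>i'<N. \<Sum>j<m. ?E i j * ?c i j i') / (real (m * N))\<^sup>2"
    by (simp add: real_rankT_eq_sum sum_distrib_left sum.swap[of _ "{..<m}"])
  finally show ?thesis
    by (simp add: orbgrand_pair_term_def sum_divide_distrib)
qed

lemma card_bitvecs: "card (bitvecs m) = 2 ^ m"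
  unfolding bitvecs_def by (simp add: card_PiE numeral_2_eq_2)

lemma finite_bitvecs: "finite (bitvecs m)"
  unfolding bitvecs_def by (simp add: finite_PiE)

lemma measurable_sgnp [measurable]: "sgnp \<in> borel_measurable borel"
  unfolding sgnp_def by measurable

locale bicm_channel =
  fixes m :: nat and S :: "'s set" and \<mu> :: "(nat \<Rightarrow> real) \<Rightarrow> 's"
    and p :: "'s \<Rightarrow> 'a::euclidean_space \<Rightarrow> real"
  assumes mu_into: "\<And>b. b \<in> bitvecs m \<Longrightarrow> \<mu> b \<in> S"
    and p_meas: "\<And>s. s \<in> S \<Longrightarrow> p s \<in> borel_measurable lborel"
    and p_nonneg: "\<And>s y. s \<in> S \<Longrightarrow> 0 \<le> p s y"
    and p_dens: "\<And>s. s \<in> S \<Longrightarrow> (\<integral>\<^sup>+ y. ennreal (p s y) \<partial>lborel) = 1"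
begin

lemma prob_space_sym_measure: "prob_space (sym_measure m \<mu> p)"
proof (rule prob_spaceI)
  let ?f = "\<lambda>(b, y). ennreal ((1/2) ^ m * p (\<mu> b) y)"
  have [measurable]: "p (\<mu> b) \<in> borel_measurable borel" if "b \<in> bitvecs m" for b
    using p_meas mu_into that by simp
  have f_meas: "?f \<in> borel_measurable (count_space (bitvecs m) \<Otimes>\<^sub>M lborel)"
    by (rule measurable_pair_measure_countable1) (simp_all add: countable_finite finite_bitvecs)
  have marginal: "(\<integral>\<^sup>+ y. ennreal ((1/2) ^ m * p (\<mu> b) y) \<partial>lborel) = ennreal ((1/2) ^ m)"
    if "b \<in> bitvecs m" for b
  proof -
    have "(\<integral>\<^sup>+ y. ennreal ((1/2) ^ m * p (\<mu> b) y) \<partial>lborel)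
        = ennreal ((1/2) ^ m) * (\<integral>\<^sup>+ y. ennreal (p (\<mu> b) y) \<partial>lborel)"
      using p_nonneg mu_into that by (subst nn_integral_cmult[symmetric]) (auto simp: ennreal_mult)
    then show ?thesis
      using p_dens mu_into that by simp
  qed
  have "emeasure (sym_measure m \<mu> p) (space (sym_measure m \<mu> p)) =
      (\<integral>\<^sup>+ b. \<integral>\<^sup>+ y. ?f (b, y) \<partial>lborel \<partial>count_space (bitvecs m))"
    unfolding sym_measure_def using f_meas
    by (simp add: emeasure_density lborel.nn_integral_fst[symmetric])
  also have "\<dots> = (\<Sum>b\<in>bitvecs m. ennreal ((1/2) ^ m))"
    by (simp add: nn_integral_count_space_finite finite_bitvecs marginal cong: sum.cong)
  also have "\<dots> = 1"
    by (simp add: card_bitvecs ennreal_of_nat_eq_real_of_nat ennreal_mult[symmetric]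
        power_mult_distrib[symmetric])
  finally show "emeasure (sym_measure m \<mu> p) (space (sym_measure m \<mu> p)) = 1" .
qed

lemma prob_space_trans_measure: "prob_space (trans_measure m \<mu> p N)"
  unfolding trans_measure_def by (intro prob_space_PiM prob_space_sym_measure)

lemma measurable_llr: "llr m S \<mu> p j \<in> borel_measurable lborel"
  unfolding llr_def qj_def using p_meas by measurable

lemma measurable_bit_reliability: "bit_reliability m S \<mu> p j \<in> borel_measurable (sym_measure m \<mu> p)"
  unfolding bit_reliability_def measurable_cong_sets[OF sets_density refl] sym_measure_def
  using measurable_llr by measurable

lemma measurable_bit_error: "bit_error m S \<mu> p j \<in> borel_measurable (sym_measure m \<mu> p)"
proof -
  have [measurable]: "(\<lambda>w. fst w j) \<in> borel_measurable (count_space (bitvecs m) \<Otimes>\<^sub>M lborel)"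
    by (rule measurable_compose[OF measurable_fst]) simp
  show ?thesis
    unfolding bit_error_def measurable_cong_sets[OF sets_density refl] sym_measure_def
    using measurable_llr by measurable
qed

text \<open>No hypothesis on m or N is needed: for m = 0 or N = 0 both sides are 0, since x / 0 = 0.\<close>
lemma variance_orbgrand_D1_le:
  "prob_space.variance (trans_measure m \<mu> p N) (orbgrand_D1 m S \<mu> p N)
     \<le> 8 * (1 + real m)\<^sup>2 / (real m)\<^sup>2 / real N"
proof -
  let ?M = "sym_measure m \<mu> p"
  let ?T = "{..<N} \<times> {..<N}"
  let ?dep = "\<lambda>t u. {fst t, snd t} \<inter> {fst u, snd u} \<noteq> {}"
  interpret sym: prob_space ?M
    by (rule prob_space_sym_measure)
  interpret product_prob_space "\<lambda>_. ?M" "{..<N}"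
    by unfold_locales
  define Z where
    "Z t = orbgrand_pair_term m N (bit_reliability m S \<mu> p) (bit_error m S \<mu> p) (fst t) (snd t)" for t
  define B where "B = (1 + real m) / (real m * (real N)\<^sup>2)"
  have D_eq: "orbgrand_D1 m S \<mu> p N = (\<lambda>\<omega>. \<Sum>t\<in>?T. Z t \<omega>)"
    by (simp add: fun_eq_iff orbgrand_D1_eq_sum_pair_terms Z_def sum.cartesian_product')
  have Z_meas: "Z t \<in> borel_measurable (PiM K (\<lambda>_. ?M))" if "fst t \<in> K" "snd t \<in> K" for t K
    unfolding Z_def using measurable_bit_reliability measurable_bit_error that
    by (rule measurable_orbgrand_pair_term)
  have Z_bound: "\<bar>Z t \<omega>\<bar> \<le> B" for t \<omega>
    unfolding Z_def B_def by (rule abs_orbgrand_pair_term_le) (simp_all add: bit_error_def)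
  have Z_int: "integrable (PiM {..<N} (\<lambda>_. ?M)) (Z t)" if "t \<in> ?T" for t
    using that Z_meas[of t "{..<N}"] Z_bound by (intro integrable_const_bound[where B=B]) auto
  have Z_restrict: "Z t (restrict \<omega> {fst t, snd t}) = Z t \<omega>" for t \<omega>
    unfolding Z_def by (rule orbgrand_pair_term_restrict[symmetric])
  have uncorrelated: "P.expectation (\<lambda>\<omega>. Z t \<omega> * Z u \<omega>) = P.expectation (Z t) * P.expectation (Z u)"
    if "t \<in> ?T" "u \<in> ?T" "\<not> ?dep t u" for t u
    using that
    by (intro integral_mult_disjoint_coordinates[where A="{fst t, snd t}" and B="{fst u, snd u}"]
        Z_meas Z_restrict Z_int) auto
  have "P.variance (\<lambda>\<omega>. \<Sum>t\<in>?T. Z t \<omega>) \<le> 2 * B\<^sup>2 * card {(t, u) \<in> ?T \<times> ?T. ?dep t u}"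
    using Z_meas Z_bound uncorrelated by (intro P.variance_sum_le_card_dependent) auto
  also have "\<dots> \<le> 2 * B\<^sup>2 * (4 * real N ^ 3)"
    using card_overlapping_index_pairs_le[of N] by (intro mult_left_mono) (simp_all flip: of_nat_power)
  also have "\<dots> = 8 * (1 + real m)\<^sup>2 / (real m)\<^sup>2 / real N"
    unfolding B_def by (cases "N = 0 \<or> m = 0") (auto simp: field_simps power2_eq_square power3_eq_cube)
  finally show ?thesis
    unfolding D_eq trans_measure_def .
qed

end

theorem lemma8:
  fixes m :: nat and S :: "'s set" and \<mu> :: "(nat \<Rightarrow> real) \<Rightarrow> 's"
    and p :: "'s \<Rightarrow> 'a::euclidean_space \<Rightarrow> real"
  assumes m_pos: "m \<ge> 1"
    and card_S: "card S = 2 ^ m"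
    and mu_bij: "bij_betw \<mu> (bitvecs m) S"
    and p_meas: "\<forall>s\<in>S. p s \<in> borel_measurable lborel"
    and p_nonneg: "\<forall>s\<in>S. \<forall>y. p s y \<ge> 0"
    and p_dens: "\<forall>s\<in>S. (\<integral>\<^sup>+ y. ennreal (p s y) \<partial>lborel) = 1"
    and A1: "\<forall>j<m. \<exists>M1>0. \<exists>a>0. \<exists>S1 :: real poly. \<forall>y. norm y > M1 \<longrightarrow>
               qj m S \<mu> p j 1 y < poly S1 (norm y) * exp (- a * norm y) \<and>
               qj m S \<mu> p j (-1) y < poly S1 (norm y) * exp (- a * norm y)"
    and A2: "\<forall>j<m. \<exists>M2>0. \<exists>S2 :: real poly. \<forall>y. norm y > M2 \<longrightarrow>
               \<bar>llr m S \<mu> p j y\<bar> < poly S2 (norm y)"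
    and A3: "\<forall>j<m. smooth_cdf (PsiCDF m S \<mu> p j)"
    and A3bar: "smooth_cdf (\<lambda>t. (\<Sum>j<m. PsiCDF m S \<mu> p j t) / real m)"
  shows "(\<lambda>N. prob_space.variance (trans_measure m \<mu> p N) (orbgrand_D1 m S \<mu> p N))
           \<longlonglongrightarrow> 0"
proof -
  interpret bicm_channel m S \<mu> p
    using mu_bij p_meas p_nonneg p_dens by unfold_locales (auto dest: bij_betw_apply)
  show ?thesis
  proof (rule Lim_null_comparison[OF always_eventually lim_const_over_n], rule allI)
    fix N
    interpret prob_space "trans_measure m \<mu> p N"
      by (rule prob_space_trans_measure)
    show "norm (variance (orbgrand_D1 m S \<mu> p N)) \<le> 8 * (1 + real m)\<^sup>2 / (real m)\<^sup>2 / real N"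
      using variance_orbgrand_D1_le variance_positive by simp
  qed
qed

end
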